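(* Let $T>0$, $\alpha>0$, $C_{\alpha,T}=\frac{\alpha}{e^{\alpha T}-1}$, and let $\mathcal{G}_\theta$ be a neural operator (defined in the context) which is assumed to be an exact map from boundary input to boundary output of the closed-loop PDE, i.e. $Y(t)=\mathcal{G}_\theta(U)(t)$ for all $t\in[0,T]$. Assume $U:[0,T]\to\mathbb{R}$ is differentiable, $P,Q$ are differentiable, each activation $\sigma_l$ is a differentiable componentwise map, each kernel $\kappa^{(l)}(t,s)$ and bias $b_l(t)$ is differentiable in $t$ with differentiation under the integral sign permitted, and $\phi:[0,T]\times\mathbb{R}\to\mathbb{R}$ is continuously differentiable. Then: (a) $t\mapsto \mathcal{G}_\theta(U)(t)$ is differentiable and $$\frac{d\mathcal{G}_\theta(U)(t)}{dt}=\Lambda_\theta(t)\,\dot U(t)+\mu_\theta(t),$$ where $$\Lambda_\theta(t)=DQ(v_L(t))\,\Big[\mathrm{Diag}(\sigma_L')W_{L-1}\,\mathrm{Diag}(\sigma_{L-1}')W_{L-2}\cdots\mathrm{Diag}(\sigma_1')W_0\Big]\,DP(U(t)),$$ $$\mu_\theta(t)=DQ(v_L(t))\,\mathrm{Diag}(\sigma_L')\sum_{i=0}^{L-1}\Big[\prod_{j=1}^{i}W_{L-j}\,\mathrm{Diag}(\sigma_{L-j}')\Big]\Big(\int_0^T\frac{\partial\kappa^{(L-1-i)}(t,s)}{\partial t}v_{L-1-i}(s)\,ds+\frac{db_{L-1-i}(t)}{dt}\Big),$$ the product $\prod_{j=1}^{i}$ being ordered left to right in increasing $j$ and equal to the identity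 when $i=0$, and $\sigma_l'$ denoting the vector of derivatives of $\sigma_l$ evaluated at the pre-activation $W_{l-1}v_{l-1}(t)+\int_0^T\kappa^{(l-1)}(t,s)v_{l-1}(s)ds+b_{l-1}(t)$. (b) If for all $t\in[0,T]$ $$\partial_Y\phi(t,\mathcal{G}_\theta(U)(t))\,\frac{d\mathcal{G}_\theta(U)(t)}{dt}+\partial_t\phi(t,\mathcal{G}_\theta(U)(t))+\alpha\,\phi(t,\mathcal{G}_\theta(U)(t))+C_{\alpha,T}\,\phi(0,U(0))\le 0,$$ then the output $Y=\mathcal{G}_\theta(U)$ is boundary feasible over $[0,T]$ within the sublevel set of $\phi$: there exists $t_0\in[0,T]$ such that $\phi(t,Y(t))\le 0$ for all $t\in[t_0,T]$.
   Context: Setting: a closed-loop PDE with state $u:[0,1]^n\times[0,T]\to\mathcal{S}\subseteq\mathbb{R}$, Dirichlet boundary input $U(t)=u(\mathbf{1},t)$, constant initial condition $u(x,0)\equiv U(0)$ (so $Y(0)=U(0)$), and boundary output $Y(t)=u(\mathbf{0},t)$. Neural operator: $\mathcal{G}_\theta$ maps functions $U:[0,T]\to\mathcal{S}$ to functions $Y:[0,T]\to\mathcal{S}$ by $v_0(t)=P(U(t))$ with $P:\mathcal{S}\to\mathbb{R}^{d_{v_0}}$; $v_{l+1}(t)=\sigma_{l+1}\big(W_l v_l(t)+\int_0^T\kappa^{(l)}(t,s)v_l(s)\,ds+b_l(t)\big)$ for $l=0,\dots,L-1$, where $\sigma_{l+1}:\mathbb{R}^{d_{v_{l+1}}}\to\mathbb{R}^{d_{v_{l+1}}}$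 is an activation applied componentwise, $W_l\in\mathbb{R}^{d_{v_{l+1}}\times d_{v_l}}$, $\kappa^{(l)}\in C([0,T]\times[0,T];\mathbb{R}^{d_{v_{l+1}}\times d_{v_l}})$, $b_l\in C([0,T];\mathbb{R}^{d_{v_{l+1}}})$; $\mathcal{G}_\theta(U)(t)=Q(v_L(t))$ with $Q:\mathbb{R}^{d_{v_L}}\to\mathcal{S}$. Here $DP$, $DQ$ denote Jacobians. A function $\phi(t,Y)$ used this way is called a boundary control barrier function (BCBF). *)

theory Defs
  imports "HOL-Analysis.Analysis"
begin

text \<open>Finite-dimensional vectors of dimension n are represented as functions
  nat \<Rightarrow> real whose components with index \<ge> n are (by masking) zero; matrices
  as nat \<Rightarrow> nat \<Rightarrow> real (row index, column index).\<close>

definition mv :: "nat \<Rightarrow> (nat \<Rightarrow> nat \<Rightarrow> real) \<Rightarrow> (nat \<Rightarrow> real) \<Rightarrow> nat \<Rightarrow> real" where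
  "mv n A x = (\<lambda>i. \<Sum>j<n. A i j * x j)"

definition dg :: "(nat \<Rightarrow> real) \<Rightarrow> (nat \<Rightarrow> real) \<Rightarrow> nat \<Rightarrow> real" where
  "dg s x = (\<lambda>i. s i * x i)"

definition mask :: "nat \<Rightarrow> (nat \<Rightarrow> real) \<Rightarrow> nat \<Rightarrow> real" where
  "mask n x = (\<lambda>i. if i < n then x i else 0)"

definition vnorm :: "nat \<Rightarrow> (nat \<Rightarrow> real) \<Rightarrow> real" where
  "vnorm n h = sqrt (\<Sum>i<n. (h i)\<^sup>2)"

definition has_grad :: "nat \<Rightarrow> ((nat \<Rightarrow> real) \<Rightarrow> real) \<Rightarrow> (nat \<Rightarrow> real) \<Rightarrow> (nat \<Rightarrow> real) \<Rightarrow> bool" where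
  "has_grad n f x g \<longleftrightarrow>
     (\<forall>e>0. \<exists>\<delta>>0. \<forall>h. (\<forall>i\<ge>n. h i = 0) \<and> vnorm n h < \<delta> \<longrightarrow>
        \<bar>f (\<lambda>i. x i + h i) - f x - (\<Sum>i<n. g i * h i)\<bar> \<le> e * vnorm n h)"

record nop =
  dims :: "nat \<Rightarrow> nat"
  nL :: nat
  Pm :: "real \<Rightarrow> nat \<Rightarrow> real"
  Qm :: "(nat \<Rightarrow> real) \<Rightarrow> real"
  sig :: "nat \<Rightarrow> real \<Rightarrow> real"
  Wm :: "nat \<Rightarrow> nat \<Rightarrow> nat \<Rightarrow> real"
  ker :: "nat \<Rightarrow> real \<Rightarrow> real \<Rightarrow> nat \<Rightarrow> nat \<Rightarrow> real"
  bias :: "nat \<Rightarrow> real \<Rightarrow> nat \<Rightarrow> real"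

primrec vl :: "nop \<Rightarrow> real \<Rightarrow> (real \<Rightarrow> real) \<Rightarrow> nat \<Rightarrow> real \<Rightarrow> nat \<Rightarrow> real" where
  "vl N T U 0 t = mask (dims N 0) (Pm N (U t))"
| "vl N T U (Suc l) t = mask (dims N (Suc l))
     (\<lambda>i. sig N (Suc l) (mv (dims N l) (Wm N l) (vl N T U l t) i
        + integral {0..T} (\<lambda>s. mv (dims N l) (ker N l t s) (vl N T U l s) i)
        + bias N l t i))"

definition pre :: "nop \<Rightarrow> real \<Rightarrow> (real \<Rightarrow> real) \<Rightarrow> nat \<Rightarrow> real \<Rightarrow> nat \<Rightarrow> real" where
  "pre N T U l t = (\<lambda>i. mv (dims N l) (Wm N l) (vl N T U l t) i
        + integral {0..T} (\<lambda>s. mv (dims N l) (ker N l t s) (vl N T U l s) i)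
        + bias N l t i)"

definition Gop :: "nop \<Rightarrow> real \<Rightarrow> (real \<Rightarrow> real) \<Rightarrow> real \<Rightarrow> real" where
  "Gop N T U t = Qm N (vl N T U (nL N) t)"

definition dsig :: "nop \<Rightarrow> (nat \<Rightarrow> real \<Rightarrow> real) \<Rightarrow> real \<Rightarrow> (real \<Rightarrow> real) \<Rightarrow> nat \<Rightarrow> real \<Rightarrow> nat \<Rightarrow> real" where
  "dsig N dsg T U l t = mask (dims N l) (\<lambda>i. dsg l (pre N T U (l - 1) t i))"

primrec lamv :: "nop \<Rightarrow> (nat \<Rightarrow> real \<Rightarrow> real) \<Rightarrow> (real \<Rightarrow> nat \<Rightarrow> real) \<Rightarrow> real \<Rightarrow> (real \<Rightarrow> real)
                  \<Rightarrow> nat \<Rightarrow> real \<Rightarrow> nat \<Rightarrow> real" where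
  "lamv N dsg DP T U 0 t = mask (dims N 0) (DP (U t))"
| "lamv N dsg DP T U (Suc l) t =
     dg (dsig N dsg T U (Suc l) t) (mv (dims N l) (Wm N l) (lamv N dsg DP T U l t))"

definition Lambda :: "nop \<Rightarrow> (nat \<Rightarrow> real \<Rightarrow> real) \<Rightarrow> (real \<Rightarrow> nat \<Rightarrow> real) \<Rightarrow> ((nat \<Rightarrow> real) \<Rightarrow> nat \<Rightarrow> real)
                       \<Rightarrow> real \<Rightarrow> (real \<Rightarrow> real) \<Rightarrow> real \<Rightarrow> real" where
  "Lambda N dsg DP DQ T U t =
     (\<Sum>i<dims N (nL N). DQ (vl N T U (nL N) t) i * lamv N dsg DP T U (nL N) t i)"

definition rterm :: "nop \<Rightarrow> (nat \<Rightarrow> real \<Rightarrow> real \<Rightarrow> nat \<Rightarrow> nat \<Rightarrow> real) \<Rightarrow> (nat \<Rightarrow> real \<Rightarrow> nat \<Rightarrow> real)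
                      \<Rightarrow> real \<Rightarrow> (real \<Rightarrow> real) \<Rightarrow> nat \<Rightarrow> real \<Rightarrow> nat \<Rightarrow> real" where
  "rterm N dker db T U k t = (\<lambda>i. integral {0..T} (\<lambda>s. mv (dims N k) (dker k t s) (vl N T U k s) i)
                                    + db k t i)"

text \<open>chain i x = [prod_(j=1..i) W_(L-j) Diag(sigma_(L-j)')] x, product ordered left to right
  in increasing j, identity for i = 0.\<close>
primrec chain :: "nop \<Rightarrow> (nat \<Rightarrow> real \<Rightarrow> real) \<Rightarrow> real \<Rightarrow> (real \<Rightarrow> real) \<Rightarrow> real \<Rightarrow> nat
                   \<Rightarrow> (nat \<Rightarrow> real) \<Rightarrow> nat \<Rightarrow> real" where
  "chain N dsg T U t 0 x = x"
| "chain N dsg T U t (Suc i) x =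
     chain N dsg T U t i
       (mv (dims N (nL N - Suc i)) (Wm N (nL N - Suc i)) (dg (dsig N dsg T U (nL N - Suc i) t) x))"

definition Mu :: "nop \<Rightarrow> (nat \<Rightarrow> real \<Rightarrow> real) \<Rightarrow> ((nat \<Rightarrow> real) \<Rightarrow> nat \<Rightarrow> real)
                   \<Rightarrow> (nat \<Rightarrow> real \<Rightarrow> real \<Rightarrow> nat \<Rightarrow> nat \<Rightarrow> real) \<Rightarrow> (nat \<Rightarrow> real \<Rightarrow> nat \<Rightarrow> real)
                   \<Rightarrow> real \<Rightarrow> (real \<Rightarrow> real) \<Rightarrow> real \<Rightarrow> real" where
  "Mu N dsg DQ dker db T U t =
     (let L = nL N;
          S = (\<lambda>k. \<Sum>i<L. chain N dsg T U t i (rterm N dker db T U (L - 1 - i) t) k)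
      in \<Sum>k<dims N L. DQ (vl N T U L t) k * dg (dsig N dsg T U L t) S k)"

end

theory Submission
  imports Defs
begin

text \<open>
  (a) Each layer is \<open>v\<^sub>l\<^sub>+\<^sub>1 = \<sigma>\<^sub>l\<^sub>+\<^sub>1(pre\<^sub>l)\<close>, so by the chain rule
  \<open>v\<^sub>l\<^sub>+\<^sub>1' = Diag(\<sigma>\<^sub>l\<^sub>+\<^sub>1') (W\<^sub>l v\<^sub>l' + r\<^sub>l)\<close>, where \<open>r\<^sub>l\<close> is the explicit time derivative of the
  kernel integral and of the bias. By induction \<open>v\<^sub>l' = \<Lambda>\<^sub>l U' + \<nu>\<^sub>l\<close>; unrolling the recursion for
  \<open>\<nu>\<^sub>L\<close> gives the sum defining \<open>\<mu>\<close>, and the gradient of \<open>Q\<close> finishes the computation.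
  The one analytic subtlety is that the Leibniz rule only gives the derivative of
  \<open>\<integral> \<kappa>(t,s) f(s) ds\<close> for each scalar entry; to recombine the entries of \<open>\<kappa>(t,s) v(s)\<close> one needs
  \<open>\<partial>\<^sub>t\<kappa>(t,\<cdot>) f\<close> to be integrable. The difference quotients of \<open>\<kappa>\<close> are weakly convergent as
  functionals on \<open>C[0,T]\<close>, hence bounded in \<open>L\<^sup>1\<close> by the uniform boundedness principle (Baire),
  and Fatou's lemma passes integrability to the limit.

  (b) Along \<open>h(t) = \<phi>(t, Y(t))\<close> the hypothesis reads \<open>h' + \<alpha> h + C h(0) \<le> 0\<close>, so
  \<open>e\<^sup>\<alpha>\<^sup>t (h(t) + h(0)/(e\<^sup>\<alpha>\<^sup>T - 1))\<close> is non-increasing; comparing its values at \<open>0\<close> and \<open>T\<close>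
  gives \<open>h(T) \<le> 0\<close>, and \<open>t\<^sub>0 = T\<close> works.
\<close>

section \<open>Integrability of kernel derivatives\<close>

text \<open>A continuous substitute for \<open>sgn\<close>: testing \<open>q\<close> against it recovers \<open>\<integral>|q|\<close>
  up to an additive constant.\<close>

definition soft_sign :: "real \<Rightarrow> real" where
  "soft_sign x = x / sqrt (x\<^sup>2 + 1)"

lemma sqrt_square_plus_one_pos: "sqrt ((x::real)\<^sup>2 + 1) > 0"
  by (simp add: add_nonneg_pos)

lemma abs_soft_sign_le_1: "\<bar>soft_sign x\<bar> \<le> 1"
proof -
  have "\<bar>x\<bar> \<le> sqrt (x\<^sup>2 + 1)" by (rule real_le_rsqrt) simp
  then show ?thesis
    using sqrt_square_plus_one_pos[of x] by (simp add: soft_sign_def abs_divide)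
qed

lemma abs_le_mult_soft_sign: "\<bar>x\<bar> - 1 \<le> x * soft_sign x"
proof -
  have sq: "sqrt (x\<^sup>2 + 1) > 0" by (rule sqrt_square_plus_one_pos)
  have "(\<bar>x\<bar> - 1) * sqrt (x\<^sup>2 + 1) \<le> x\<^sup>2"
  proof (cases "\<bar>x\<bar> \<le> 1")
    case True
    then have "(\<bar>x\<bar> - 1) * sqrt (x\<^sup>2 + 1) \<le> 0" using sq by (intro mult_nonpos_nonneg) auto
    then show ?thesis by (meson order_trans zero_le_power2)
  next
    case False
    have "sqrt (x\<^sup>2 + 1) \<le> \<bar>x\<bar> + 1"
      by (rule real_le_lsqrt) (auto simp: power2_eq_square algebra_simps)
    then have "(\<bar>x\<bar> - 1) * sqrt (x\<^sup>2 + 1) \<le> (\<bar>x\<bar> - 1) * (\<bar>x\<bar> + 1)"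
      using False by (intro mult_left_mono) auto
    also have "\<dots> \<le> x\<^sup>2" by (simp add: power2_eq_square algebra_simps)
    finally show ?thesis .
  qed
  then have "\<bar>x\<bar> - 1 \<le> x\<^sup>2 / sqrt (x\<^sup>2 + 1)" by (subst pos_le_divide_eq[OF sq])
  also have "\<dots> = x * soft_sign x" unfolding soft_sign_def power2_eq_square by simp
  finally show ?thesis .
qed

lemma continuous_on_soft_sign: "continuous_on UNIV soft_sign"
  unfolding soft_sign_def
  by (intro continuous_intros ballI) (metis sqrt_square_plus_one_pos order_less_irrefl)

lemma pointwise_bounded_imp_bounded_on_ball:
  fixes F :: "'i \<Rightarrow> 'a::complete_space \<Rightarrow> real"
  assumes cont: "\<And>i. continuous_on UNIV (F i)"
    and bdd: "\<And>x. \<exists>B. \<forall>i. \<bar>F i x\<bar> \<le> B"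
  obtains x0 r B where "r > 0" "\<And>i y. y \<in> ball x0 r \<Longrightarrow> \<bar>F i y\<bar> \<le> B"
proof -
  define E where "E k = (\<Inter>i. F i -` {- real k..real k})" for k :: nat
  have memE: "x \<in> E k \<longleftrightarrow> (\<forall>i. \<bar>F i x\<bar> \<le> real k)" for x k
    unfolding E_def by (simp add: abs_le_iff) (meson minus_le_iff)
  have closedE: "closed (E k)" for k
    unfolding E_def by (intro closed_INT ballI closed_vimage[OF closed_atLeastAtMost] cont)
  have coverE: "(\<Union>k. E k) = UNIV"
  proof (rule set_eqI)
    fix x
    obtain B where "\<forall>i. \<bar>F i x\<bar> \<le> B" using bdd by blast
    then have "x \<in> E (nat \<lceil>B\<rceil>)"
      unfolding memE by (auto intro: order_trans[OF _ real_nat_ceiling_ge])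
    then show "x \<in> (\<Union>k. E k) \<longleftrightarrow> x \<in> UNIV" by blast
  qed
  obtain k where "interior (E k) \<noteq> {}"
  proof (rule ccontr)
    assume "\<not> thesis"
    then have "\<forall>k. euclidean interior_of E k = {}" using that by auto
    then have "euclidean interior_of \<Union>(range E) = {}"
      by (intro Baire_category_alt)
        (auto simp: completely_metrizable_space_euclidean closedE closed_closedin[symmetric])
    then show False using coverE by simp
  qed
  then obtain x0 where "x0 \<in> interior (E k)" by blast
  then obtain r where r: "r > 0" "ball x0 r \<subseteq> E k"
    using open_contains_ball_eq open_interior interior_subset by (metis subset_trans)
  have "\<bar>F i y\<bar> \<le> real k" if "y \<in> ball x0 r" for i y
  proof -
    have "y \<in> E k" using r(2) that by blast
    then show ?thesis unfolding memE by blast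
  qed
  with r(1) show ?thesis by (rule that)
qed

lemma soft_sign_test_function:
  fixes q :: "real \<Rightarrow> real" and a b r :: real
  assumes ab: "a \<le> b" and q: "continuous_on {a..b} q" and r: "r > 0"
  obtains g :: "real \<Rightarrow>\<^sub>C real"
  where "norm g \<le> r"
    and "r * (integral {a..b} (\<lambda>s. \<bar>q s\<bar>) - (b - a)) \<le> integral {a..b} (\<lambda>s. q s * g s)"
proof -
  define h where "h s = r * soft_sign (q s)" for s
  have "continuous_on (cbox a b) h"
    unfolding h_def cbox_interval
    by (intro continuous_intros continuous_on_compose2[OF continuous_on_soft_sign q]) auto
  then obtain g :: "real \<Rightarrow>\<^sub>C real"
    where g: "\<And>x. x \<in> cbox a b \<Longrightarrow> g x = h x" "\<And>x. g x = h (clamp a b x)"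
    by (rule continuous_on_cbox_bcontfunE) blast
  have "\<bar>h y\<bar> \<le> r" for y
    using r abs_soft_sign_le_1 by (simp add: h_def abs_mult mult_left_le)
  then have "norm g \<le> r" by (intro norm_bound) (simp only: g(2) real_norm_def)
  moreover have "r * (integral {a..b} (\<lambda>s. \<bar>q s\<bar>) - (b - a)) \<le> integral {a..b} (\<lambda>s. q s * g s)"
  proof -
    have "r * (integral {a..b} (\<lambda>s. \<bar>q s\<bar>) - (b - a)) = integral {a..b} (\<lambda>s. r * (\<bar>q s\<bar> - 1))"
      using ab by (simp add: integral_diff integrable_continuous_interval continuous_intros q)
    also have "\<dots> \<le> integral {a..b} (\<lambda>s. q s * h s)"
    proof (rule integral_le)
      show "(\<lambda>s. r * (\<bar>q s\<bar> - 1)) integrable_on {a..b}" "(\<lambda>s. q s * h s) integrable_on {a..b}"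
        using \<open>continuous_on (cbox a b) h\<close>
        by (auto intro!: integrable_continuous_interval continuous_intros q simp: cbox_interval)
      show "r * (\<bar>q s\<bar> - 1) \<le> q s * h s" for s
        using r abs_le_mult_soft_sign[of "q s"] by (simp add: h_def mult.left_commute)
    qed
    also have "\<dots> = integral {a..b} (\<lambda>s. q s * g s)"
      by (rule integral_cong) (simp add: g(1) cbox_interval)
    finally show ?thesis .
  qed
  ultimately show ?thesis by (rule that)
qed

lemma weakly_bounded_imp_integral_abs_bounded:
  fixes q :: "'i \<Rightarrow> real \<Rightarrow> real" and a b :: real
  assumes ab: "a \<le> b"
    and cont: "\<And>n. continuous_on {a..b} (q n)"
    and weak: "\<And>f. continuous_on {a..b} f \<Longrightarrow> \<exists>B. \<forall>n. \<bar>integral {a..b} (\<lambda>s. q n s * f s)\<bar> \<le> B"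
  obtains M where "\<And>n. integral {a..b} (\<lambda>s. \<bar>q n s\<bar>) \<le> M"
proof -
  define \<Lambda> where "\<Lambda> n (f::real \<Rightarrow>\<^sub>C real) = integral {a..b} (\<lambda>s. q n s * f s)" for n f
  have int: "(\<lambda>s. q n s * g s) integrable_on {a..b}" if "continuous_on {a..b} g" for n g
    by (intro integrable_continuous_interval continuous_intros cont that)
  have \<Lambda>_add: "\<Lambda> n (f + g) = \<Lambda> n f + \<Lambda> n g" for n f g
    unfolding \<Lambda>_def by (simp add: distrib_left integral_add int)
  have "continuous_on UNIV (\<Lambda> n)" for n
  proof (rule lipschitz_on_continuous_on)
    define A where "A = integral {a..b} (\<lambda>s. \<bar>q n s\<bar>)"
    have "dist (\<Lambda> n f) (\<Lambda> n g) \<le> A * dist f g" for f g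
    proof -
      have "\<Lambda> n f - \<Lambda> n g = integral {a..b} (\<lambda>s. q n s * (f s - g s))"
        unfolding \<Lambda>_def by (simp add: right_diff_distrib integral_diff int)
      also have "norm \<dots> \<le> integral {a..b} (\<lambda>s. \<bar>q n s\<bar> * dist f g)"
        using dist_bounded[of f _ g]
        by (intro integral_norm_bound_integral int)
          (auto intro!: integrable_continuous_interval continuous_intros cont
            simp: abs_mult dist_real_def mult_left_mono)
      finally show ?thesis by (simp add: A_def dist_real_def)
    qed
    moreover have "A \<ge> 0" unfolding A_def
      by (intro integral_nonneg integrable_continuous_interval continuous_intros cont) auto
    ultimately show "A-lipschitz_on UNIV (\<Lambda> n)" by (intro lipschitz_onI) auto
  qed
  moreover have "\<exists>B. \<forall>n. \<bar>\<Lambda> n f\<bar> \<le> B" for f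
    unfolding \<Lambda>_def by (rule weak) simp
  ultimately obtain f0 r B where r: "r > 0" and B: "\<And>n f. f \<in> ball f0 r \<Longrightarrow> \<bar>\<Lambda> n f\<bar> \<le> B"
    by (rule pointwise_bounded_imp_bounded_on_ball) blast
  have "integral {a..b} (\<lambda>s. \<bar>q n s\<bar>) \<le> 4 * B / r + (b - a)" for n
  proof -
    obtain g where g: "norm g \<le> r / 2"
      "r / 2 * (integral {a..b} (\<lambda>s. \<bar>q n s\<bar>) - (b - a)) \<le> \<Lambda> n g"
      unfolding \<Lambda>_def using soft_sign_test_function[OF ab cont, of "r / 2"] r by auto
    have "f0 + g \<in> ball f0 r" "f0 \<in> ball f0 r" using g(1) r by (auto simp: dist_norm)
    then have "\<Lambda> n g \<le> 2 * B" using B[of "f0 + g" n] B[of f0 n] \<Lambda>_add[of n f0 g] by linarith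
    with g(2) r show ?thesis by (simp add: field_simps)
  qed
  then show ?thesis by (rule that)
qed

lemma Fatou_integrable_on_limit:
  fixes p :: "nat \<Rightarrow> real \<Rightarrow> real" and g :: "real \<Rightarrow> real"
  assumes cont: "\<And>n. continuous_on {a..b} (p n)"
    and lim: "\<And>s. s \<in> {a..b} \<Longrightarrow> (\<lambda>n. p n s) \<longlonglongrightarrow> g s"
    and bound: "\<And>n. integral {a..b} (\<lambda>s. \<bar>p n s\<bar>) \<le> M"
  shows "g integrable_on {a..b}"
proof -
  define h where "h n x = indicator {a..b} x *\<^sub>R p n x" for n x
  define H where "H x = indicator {a..b} x *\<^sub>R g x" for x
  have h_meas: "h n \<in> borel_measurable borel" for n
    unfolding h_def by (intro borel_measurable_continuous_on_indicator cont) auto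
  have h_lim: "(\<lambda>n. h n x) \<longlonglongrightarrow> H x" for x
    by (cases "x \<in> {a..b}") (auto simp: h_def H_def intro!: tendsto_intros lim)
  have h_nn: "(\<integral>\<^sup>+x. ennreal (norm (h n x)) \<partial>lborel) \<le> ennreal M" for n
  proof -
    have hi: "((\<lambda>x. \<bar>p n x\<bar>) has_integral integral {a..b} (\<lambda>x. \<bar>p n x\<bar>)) {a..b}"
      by (intro integrable_integral integrable_continuous_interval continuous_intros cont)
    have "(\<integral>\<^sup>+x. ennreal (norm (h n x)) \<partial>lborel)
        = (\<integral>\<^sup>+x. ennreal \<bar>p n x\<bar> * indicator {a..b} x \<partial>lborel)"
      by (intro nn_integral_cong) (simp add: h_def split: split_indicator)
    also have "\<dots> = ennreal (integral {a..b} (\<lambda>x. \<bar>p n x\<bar>))"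
      by (rule nn_integral_has_integral_lebesgue'[OF _ hi]) simp
    also have "\<dots> \<le> ennreal M" by (intro ennreal_leI bound)
    finally show ?thesis .
  qed
  have "(\<integral>\<^sup>+x. ennreal (norm (H x)) \<partial>lborel) = (\<integral>\<^sup>+x. liminf (\<lambda>n. ennreal (norm (h n x))) \<partial>lborel)"
  proof (intro nn_integral_cong)
    fix x
    have "(\<lambda>n. ennreal (norm (h n x))) \<longlonglongrightarrow> ennreal (norm (H x))"
      by (intro tendsto_ennrealI tendsto_norm h_lim)
    then show "ennreal (norm (H x)) = liminf (\<lambda>n. ennreal (norm (h n x)))"
      using lim_imp_Liminf[OF sequentially_bot] by metis
  qed
  also have "\<dots> \<le> liminf (\<lambda>n. \<integral>\<^sup>+x. ennreal (norm (h n x)) \<partial>lborel)"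
    by (rule nn_integral_liminf) (use h_meas in simp)
  also have "\<dots> \<le> ennreal M"
    using h_nn by (intro Liminf_le) auto
  also have "\<dots> < \<infinity>" by simp
  finally have "integrable lborel H"
    using borel_measurable_LIMSEQ_real[OF h_lim h_meas] by (intro integrableI_bounded) simp_all
  then have "set_integrable lborel {a..b} g"
    unfolding set_integrable_def H_def .
  then show ?thesis by (rule set_borel_integral_eq_integral(1))
qed

lemma DERIV_difference_quotient_sequence:
  fixes F :: "real \<Rightarrow> real"
  assumes "(F has_real_derivative D) (at t within S)"
    and "\<And>n. x n \<in> S - {t}" and "x \<longlonglongrightarrow> t"
  shows "(\<lambda>n. (F (x n) - F t) / (x n - t)) \<longlonglongrightarrow> D"
proof -
  have "filterlim x (at t within S) sequentially"
    unfolding filterlim_at using assms(2,3) by auto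
  with assms(1) show ?thesis
    unfolding has_field_derivative_iff by (rule filterlim_compose)
qed

lemma continuous_on_section:
  fixes K :: "'a::topological_space \<Rightarrow> 'b::topological_space \<Rightarrow> 'c::topological_space"
  assumes "continuous_on (A \<times> B) (\<lambda>z. K (fst z) (snd z))" and "\<tau> \<in> A"
  shows "continuous_on B (K \<tau>)"
proof -
  have "continuous_on B ((\<lambda>z. K (fst z) (snd z)) \<circ> (\<lambda>s. (\<tau>, s)))"
    by (intro continuous_on_compose continuous_intros continuous_on_subset[OF assms(1)])
      (use assms(2) in auto)
  then show ?thesis by (simp add: o_def)
qed

lemma Leibniz_derivative_integrable:
  fixes K dK :: "real \<Rightarrow> real \<Rightarrow> real" and f :: "real \<Rightarrow> real"
  assumes ab: "a < b" and t: "t \<in> {a..b}"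
    and K_cont: "continuous_on ({a..b} \<times> {a..b}) (\<lambda>z. K (fst z) (snd z))"
    and K_diff: "\<And>s. s \<in> {a..b} \<Longrightarrow> ((\<lambda>\<tau>. K \<tau> s) has_real_derivative dK t s) (at t within {a..b})"
    and Leibniz: "\<And>g. continuous_on {a..b} g \<Longrightarrow>
        ((\<lambda>\<tau>. integral {a..b} (\<lambda>s. K \<tau> s * g s)) has_real_derivative
          integral {a..b} (\<lambda>s. dK t s * g s)) (at t within {a..b})"
    and f: "continuous_on {a..b} f"
  shows "(\<lambda>s. dK t s * f s) integrable_on {a..b}"
proof -
  obtain x where x: "\<And>n. x n \<in> {a..b} - {t}" "x \<longlonglongrightarrow> t"
    using t ab islimpt_sequential[of t "{a..b}"] by auto
  have x_ne: "x n - t \<noteq> 0" for n using x(1)[of n] by auto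
  define q where "q n s = (K (x n) s - K t s) / (x n - t)" for n s
  have K_sec: "continuous_on {a..b} (K \<tau>)" if "\<tau> \<in> {a..b}" for \<tau>
    by (rule continuous_on_section[OF K_cont that])
  have q_cont: "continuous_on {a..b} (q n)" for n
    unfolding q_def using x(1)[of n] x_ne by (intro continuous_intros K_sec t) auto
  \<comment> \<open>The Leibniz rule makes the difference quotients weakly convergent, hence weakly bounded.\<close>
  have weak: "\<exists>B. \<forall>n. \<bar>integral {a..b} (\<lambda>s. q n s * g s)\<bar> \<le> B" if g: "continuous_on {a..b} g" for g
  proof -
    define I where "I \<tau> = integral {a..b} (\<lambda>s. K \<tau> s * g s)" for \<tau>
    have int: "(\<lambda>s. K \<tau> s * g s) integrable_on {a..b}" if "\<tau> \<in> {a..b}" for \<tau>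
      by (intro integrable_continuous_interval continuous_intros K_sec g that)
    have eq: "integral {a..b} (\<lambda>s. q n s * g s) = (I (x n) - I t) / (x n - t)" for n
    proof -
      have "integral {a..b} (\<lambda>s. q n s * g s)
          = integral {a..b} (\<lambda>s. (K (x n) s * g s - K t s * g s) / (x n - t))"
        unfolding q_def by (rule integral_cong) (simp add: field_simps x_ne)
      also have "\<dots> = integral {a..b} (\<lambda>s. K (x n) s * g s - K t s * g s) / (x n - t)"
        by (rule integral_divide)
      also have "\<dots> = (I (x n) - I t) / (x n - t)"
        unfolding I_def using x(1)[of n] t by (subst integral_diff) (auto intro: int)
      finally show ?thesis .
    qed
    have "(\<lambda>n. (I (x n) - I t) / (x n - t)) \<longlonglongrightarrow> integral {a..b} (\<lambda>s. dK t s * g s)"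
      unfolding I_def by (rule DERIV_difference_quotient_sequence[OF Leibniz[OF g] x])
    then have "bounded (range (\<lambda>n. integral {a..b} (\<lambda>s. q n s * g s)))"
      unfolding eq by (rule convergent_imp_bounded)
    then show ?thesis by (auto simp: bounded_iff)
  qed
  obtain M where M: "\<And>n. integral {a..b} (\<lambda>s. \<bar>q n s\<bar>) \<le> M"
    using weakly_bounded_imp_integral_abs_bounded[OF _ q_cont weak] ab by auto
  obtain F where F: "\<And>s. s \<in> {a..b} \<Longrightarrow> \<bar>f s\<bar> \<le> F"
  proof -
    have "bounded (f ` {a..b})"
      by (intro compact_imp_bounded compact_continuous_image f compact_Icc)
    then obtain F where "\<forall>y\<in>f ` {a..b}. norm y \<le> F" by (auto simp: bounded_iff)
    then show ?thesis by (intro that[of F]) auto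
  qed
  have "integral {a..b} (\<lambda>s. \<bar>q n s * f s\<bar>) \<le> M * F" for n
  proof -
    have "integral {a..b} (\<lambda>s. \<bar>q n s * f s\<bar>) \<le> integral {a..b} (\<lambda>s. \<bar>q n s\<bar> * F)"
      using F by (intro integral_le integrable_continuous_interval continuous_intros q_cont f)
        (auto simp: abs_mult mult_left_mono)
    also have "\<dots> \<le> M * F"
      using M[of n] F[of a] ab by (simp add: mult_right_mono)
    finally show ?thesis .
  qed
  moreover have "(\<lambda>n. q n s * f s) \<longlonglongrightarrow> dK t s * f s" if "s \<in> {a..b}" for s
    unfolding q_def
    by (intro tendsto_mult_right DERIV_difference_quotient_sequence[OF K_diff[OF that] x])
  ultimately show ?thesis
    by (intro Fatou_integrable_on_limit[where p = "\<lambda>n s. q n s * f s"] continuous_intros q_cont f)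
qed


lemma has_real_derivative_integral_mv:
  fixes K dK :: "real \<Rightarrow> real \<Rightarrow> nat \<Rightarrow> nat \<Rightarrow> real" and v :: "real \<Rightarrow> nat \<Rightarrow> real"
  assumes ab: "a < b" and t: "t \<in> {a..b}"
    and v: "\<And>j. j < n \<Longrightarrow> continuous_on {a..b} (\<lambda>s. v s j)"
    and K_cont: "\<And>j. j < n \<Longrightarrow> continuous_on ({a..b} \<times> {a..b}) (\<lambda>z. K (fst z) (snd z) i j)"
    and K_diff: "\<And>j s. j < n \<Longrightarrow> s \<in> {a..b} \<Longrightarrow>
        ((\<lambda>\<tau>. K \<tau> s i j) has_real_derivative dK t s i j) (at t within {a..b})"
    and Leibniz: "\<And>j f. j < n \<Longrightarrow> continuous_on {a..b} f \<Longrightarrow>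
        ((\<lambda>\<tau>. integral {a..b} (\<lambda>s. K \<tau> s i j * f s)) has_real_derivative
          integral {a..b} (\<lambda>s. dK t s i j * f s)) (at t within {a..b})"
  shows "((\<lambda>\<tau>. integral {a..b} (\<lambda>s. mv n (K \<tau> s) (v s) i)) has_real_derivative
           integral {a..b} (\<lambda>s. mv n (dK t s) (v s) i)) (at t within {a..b})"
proof -
  have split: "integral {a..b} (\<lambda>s. mv n (K \<tau> s) (v s) i)
      = (\<Sum>j<n. integral {a..b} (\<lambda>s. K \<tau> s i j * v s j))" if "\<tau> \<in> {a..b}" for \<tau>
    unfolding mv_def
    by (intro integral_sum integrable_continuous_interval continuous_intros v
        continuous_on_section[OF K_cont that]) auto
  have "(\<lambda>s. dK t s i j * v s j) integrable_on {a..b}" if "j < n" for j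
    using that
    by (intro Leibniz_derivative_integrable[OF ab t, where K = "\<lambda>\<tau> s. K \<tau> s i j"] K_cont K_diff Leibniz v)
  then have "integral {a..b} (\<lambda>s. mv n (dK t s) (v s) i)
      = (\<Sum>j<n. integral {a..b} (\<lambda>s. dK t s i j * v s j))"
    unfolding mv_def by (intro integral_sum) auto
  moreover have "((\<lambda>\<tau>. \<Sum>j<n. integral {a..b} (\<lambda>s. K \<tau> s i j * v s j)) has_real_derivative
      (\<Sum>j<n. integral {a..b} (\<lambda>s. dK t s i j * v s j))) (at t within {a..b})"
    by (intro DERIV_sum Leibniz v) auto
  ultimately show ?thesis
    using t split by (auto intro: has_field_derivative_transform_within[where d = 1])
qed

section \<open>Differentiation through the layers\<close>

lemma has_grad_remainder_along_curve:
  fixes v :: "real \<Rightarrow> nat \<Rightarrow> real" and G :: "nat \<Rightarrow> real" and Q :: "(nat \<Rightarrow> real) \<Rightarrow> real"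
  assumes cont: "\<And>j. j < n \<Longrightarrow> ((\<lambda>y. v y j) \<longlongrightarrow> v t j) (at t within S)"
    and mask: "\<And>y j. j \<ge> n \<Longrightarrow> v y j = 0"
    and grad: "has_grad n Q (v t) G"
    and e: "e > 0"
  shows "eventually (\<lambda>y. \<bar>Q (v y) - Q (v t) - (\<Sum>j<n. G j * (v y j - v t j))\<bar>
                         \<le> e * (\<Sum>j<n. \<bar>v y j - v t j\<bar>)) (at t within S)"
proof -
  obtain \<delta> where \<delta>: "\<delta> > 0" and small: "\<And>h. (\<forall>i\<ge>n. h i = 0) \<and> vnorm n h < \<delta> \<Longrightarrow>
      \<bar>Q (\<lambda>i. v t i + h i) - Q (v t) - (\<Sum>i<n. G i * h i)\<bar> \<le> e * vnorm n h"
    using grad e unfolding has_grad_def by blast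
  have "((\<lambda>y. \<Sum>j<n. \<bar>v y j - v t j\<bar>) \<longlongrightarrow> (\<Sum>j<n. \<bar>v t j - v t j\<bar>)) (at t within S)"
    by (intro tendsto_sum tendsto_rabs tendsto_diff cont tendsto_const) auto
  then have "eventually (\<lambda>y. (\<Sum>j<n. \<bar>v y j - v t j\<bar>) < \<delta>) (at t within S)"
    using \<delta> by (auto dest: order_tendstoD(2))
  then show ?thesis
  proof eventually_elim
    case (elim y)
    define h where "h i = v y i - v t i" for i
    have "vnorm n h \<le> (\<Sum>j<n. \<bar>h j\<bar>)"
      unfolding vnorm_def using L2_set_le_sum_abs[of h "{..<n}"] by (simp add: L2_set_def)
    moreover have "(\<lambda>i. v t i + h i) = v y" "\<forall>i\<ge>n. h i = 0"
      unfolding h_def using mask by auto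
    ultimately show ?case
      using small[of h] elim e unfolding h_def
      by (smt (verit, best) mult_left_mono)
  qed
qed

lemma has_grad_chain:
  fixes v :: "real \<Rightarrow> nat \<Rightarrow> real" and v' G :: "nat \<Rightarrow> real" and Q :: "(nat \<Rightarrow> real) \<Rightarrow> real"
  assumes v_diff: "\<And>j. j < n \<Longrightarrow> ((\<lambda>y. v y j) has_real_derivative v' j) (at t within S)"
    and mask: "\<And>y j. j \<ge> n \<Longrightarrow> v y j = 0"
    and grad: "has_grad n Q (v t) G"
  shows "((\<lambda>y. Q (v y)) has_real_derivative (\<Sum>j<n. G j * v' j)) (at t within S)"
proof -
  define R where "R y = Q (v y) - Q (v t) - (\<Sum>j<n. G j * (v y j - v t j))" for y
  have quot: "((\<lambda>y. (v y j - v t j) / (y - t)) \<longlongrightarrow> v' j) (at t within S)" if "j < n" for j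
    using v_diff[OF that] unfolding has_field_derivative_iff by simp
  have cont: "((\<lambda>y. v y j) \<longlongrightarrow> v t j) (at t within S)" if "j < n" for j
    using DERIV_continuous[OF v_diff[OF that]] by (simp add: continuous_within)
  define B where "B = (\<Sum>j<n. \<bar>v' j\<bar> + 1) + 1"
  have B: "B > 0" unfolding B_def by (simp add: sum_nonneg add_nonneg_pos)
  have "((\<lambda>y. R y / (y - t)) \<longlongrightarrow> 0) (at t within S)"
  proof (rule tendstoI)
    fix \<epsilon> :: real assume \<epsilon>: "\<epsilon> > 0"
    have "eventually (\<lambda>y. \<bar>(v y j - v t j) / (y - t)\<bar> < \<bar>v' j\<bar> + 1) (at t within S)" if "j < n" for j
      by (rule order_tendstoD(2)[OF tendsto_rabs[OF quot[OF that]]]) simp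
    then have "eventually (\<lambda>y. \<forall>j\<in>{..<n}. \<bar>(v y j - v t j) / (y - t)\<bar> < \<bar>v' j\<bar> + 1) (at t within S)"
      by (intro eventually_ball_finite) auto
    moreover have "eventually (\<lambda>y. \<bar>R y\<bar> \<le> \<epsilon> / (2 * B) * (\<Sum>j<n. \<bar>v y j - v t j\<bar>)) (at t within S)"
      unfolding R_def using \<epsilon> B by (intro has_grad_remainder_along_curve cont mask grad) auto
    ultimately show "eventually (\<lambda>y. dist (R y / (y - t)) 0 < \<epsilon>) (at t within S)"
    proof eventually_elim
      case (elim y)
      have "\<bar>R y / (y - t)\<bar> \<le> \<epsilon> / (2 * B) * B"
      proof (cases "y = t")
        case False
        have "\<bar>R y / (y - t)\<bar> = \<bar>R y\<bar> / \<bar>y - t\<bar>" by (simp add: abs_divide)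
        also have "\<dots> \<le> \<epsilon> / (2 * B) * (\<Sum>j<n. \<bar>v y j - v t j\<bar>) / \<bar>y - t\<bar>"
          using elim(2) by (rule divide_right_mono) simp
        also have "\<dots> = \<epsilon> / (2 * B) * (\<Sum>j<n. \<bar>(v y j - v t j) / (y - t)\<bar>)"
          by (simp add: sum_divide_distrib[symmetric] abs_divide)
        also have "\<dots> \<le> \<epsilon> / (2 * B) * B"
        proof (rule mult_left_mono)
          have "(\<Sum>j<n. \<bar>(v y j - v t j) / (y - t)\<bar>) \<le> (\<Sum>j<n. \<bar>v' j\<bar> + 1)"
            using elim(1) by (intro sum_mono less_imp_le) blast
          then show "(\<Sum>j<n. \<bar>(v y j - v t j) / (y - t)\<bar>) \<le> B" by (simp add: B_def)
        qed (use \<epsilon> B in simp)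
        finally show ?thesis .
      qed (use \<epsilon> B in simp)
      also have "\<dots> < \<epsilon>" using B \<epsilon> by simp
      finally show ?case by (simp add: dist_real_def)
    qed
  qed
  moreover have "((\<lambda>y. \<Sum>j<n. G j * ((v y j - v t j) / (y - t))) \<longlongrightarrow> (\<Sum>j<n. G j * v' j)) (at t within S)"
    by (intro tendsto_sum tendsto_mult_left quot) auto
  moreover have "(Q (v y) - Q (v t)) / (y - t) = (\<Sum>j<n. G j * ((v y j - v t j) / (y - t))) + R y / (y - t)" for y
  proof -
    have "(\<Sum>j<n. G j * ((v y j - v t j) / (y - t))) = (\<Sum>j<n. G j * (v y j - v t j)) / (y - t)"
      by (simp add: sum_divide_distrib)
    then show ?thesis by (simp add: R_def diff_divide_distrib add_divide_distrib)
  qed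
  ultimately show ?thesis
    unfolding has_field_derivative_iff using tendsto_add by fastforce
qed

text \<open>\<open>\<nu>\<^sub>l\<close> is the part of \<open>v\<^sub>l'\<close> not proportional to \<open>U'\<close>: \<open>v\<^sub>l' = lamv\<^sub>l U' + \<nu>\<^sub>l\<close>.\<close>

primrec nu :: "nop \<Rightarrow> (nat \<Rightarrow> real \<Rightarrow> real) \<Rightarrow> (nat \<Rightarrow> real \<Rightarrow> real \<Rightarrow> nat \<Rightarrow> nat \<Rightarrow> real)
    \<Rightarrow> (nat \<Rightarrow> real \<Rightarrow> nat \<Rightarrow> real) \<Rightarrow> real \<Rightarrow> (real \<Rightarrow> real) \<Rightarrow> nat \<Rightarrow> real \<Rightarrow> nat \<Rightarrow> real" where
  "nu N dsg dker db T U 0 t = (\<lambda>j. 0)"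
| "nu N dsg dker db T U (Suc l) t = dg (dsig N dsg T U (Suc l) t)
     (\<lambda>i. mv (dims N l) (Wm N l) (nu N dsg dker db T U l t) i + rterm N dker db T U l t i)"

lemma chain_add:
  "chain N dsg T U t i (\<lambda>k. x k + y k) = (\<lambda>k. chain N dsg T U t i x k + chain N dsg T U t i y k)"
proof (induction i arbitrary: x y)
  case (Suc i)
  have "mv n A (dg s (\<lambda>k. x k + y k)) = (\<lambda>k. mv n A (dg s x) k + mv n A (dg s y) k)" for n A s x y
    by (auto simp: mv_def dg_def fun_eq_iff sum.distrib algebra_simps)
  with Suc show ?case by simp
qed simp

lemma chain_zero: "chain N dsg T U t i (\<lambda>k. 0) = (\<lambda>k. 0)"
  by (induction i) (simp_all add: mv_def dg_def)

lemma nu_output_unfold: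
  assumes "Suc m \<le> nL N"
  shows "nu N dsg dker db T U (nL N) t = dg (dsig N dsg T U (nL N) t)
     (\<lambda>k. (\<Sum>i<Suc m. chain N dsg T U t i (rterm N dker db T U (nL N - 1 - i) t) k)
        + chain N dsg T U t m (mv (dims N (nL N - Suc m)) (Wm N (nL N - Suc m))
            (nu N dsg dker db T U (nL N - Suc m) t)) k)"
  using assms
proof (induction m)
  case 0
  then obtain l where "nL N = Suc l" by (cases "nL N") auto
  then show ?case by (simp add: add.commute)
next
  case (Suc m)
  define l where "l = nL N - Suc (Suc m)"
  have l: "nL N - Suc m = Suc l" "nL N - 1 - Suc m = l" using Suc.prems by (auto simp: l_def)
  have "chain N dsg T U t m (mv (dims N (nL N - Suc m)) (Wm N (nL N - Suc m))
          (nu N dsg dker db T U (nL N - Suc m) t))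
      = chain N dsg T U t (Suc m) (\<lambda>i. mv (dims N l) (Wm N l) (nu N dsg dker db T U l t) i
          + rterm N dker db T U l t i)"
    by (simp add: l(1) l_def[symmetric])
  also have "\<dots> = (\<lambda>k. chain N dsg T U t (Suc m) (mv (dims N l) (Wm N l) (nu N dsg dker db T U l t)) k
       + chain N dsg T U t (Suc m) (rterm N dker db T U l t) k)"
    by (rule chain_add)
  finally show ?case
    using Suc by (simp add: l(2) l_def algebra_simps)
qed

lemma nu_output:
  "nu N dsg dker db T U (nL N) t = dg (dsig N dsg T U (nL N) t)
     (\<lambda>k. \<Sum>i<nL N. chain N dsg T U t i (rterm N dker db T U (nL N - 1 - i) t) k)"
proof (cases "nL N")
  case 0
  then show ?thesis by (simp add: dg_def)
next
  case (Suc m)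
  then show ?thesis
    using nu_output_unfold[of m N] by (simp add: mv_def chain_zero)
qed

locale differentiable_neural_operator =
  fixes N :: nop and T :: real and U U' :: "real \<Rightarrow> real"
    and DP :: "real \<Rightarrow> nat \<Rightarrow> real" and DQ :: "(nat \<Rightarrow> real) \<Rightarrow> nat \<Rightarrow> real"
    and dsg :: "nat \<Rightarrow> real \<Rightarrow> real"
    and dker :: "nat \<Rightarrow> real \<Rightarrow> real \<Rightarrow> nat \<Rightarrow> nat \<Rightarrow> real"
    and db :: "nat \<Rightarrow> real \<Rightarrow> nat \<Rightarrow> real"
  assumes T_pos: "T > 0"
    and U_diff: "\<forall>t\<in>{0..T}. (U has_real_derivative U' t) (at t within {0..T})"
    and P_diff: "\<forall>y i. i < dims N 0 \<longrightarrow> ((\<lambda>y. Pm N y i) has_real_derivative DP y i) (at y)"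
    and Q_diff: "\<forall>x. (\<forall>i\<ge>dims N (nL N). x i = 0) \<longrightarrow> has_grad (dims N (nL N)) (Qm N) x (DQ x)"
    and sig_diff: "\<forall>l x. 1 \<le> l \<and> l \<le> nL N \<longrightarrow> (sig N l has_real_derivative dsg l x) (at x)"
    and ker_cont: "\<forall>l<nL N. \<forall>i<dims N (Suc l). \<forall>j<dims N l.
        continuous_on ({0..T} \<times> {0..T}) (\<lambda>z. ker N l (fst z) (snd z) i j)"
    and ker_diff: "\<forall>l<nL N. \<forall>i<dims N (Suc l). \<forall>j<dims N l. \<forall>t\<in>{0..T}. \<forall>s\<in>{0..T}.
        ((\<lambda>t. ker N l t s i j) has_real_derivative dker l t s i j) (at t within {0..T})"
    and ker_leibniz: "\<forall>l<nL N. \<forall>i<dims N (Suc l). \<forall>j<dims N l. \<forall>f. continuous_on {0..T} f \<longrightarrow>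
        (\<forall>t\<in>{0..T}. ((\<lambda>t. integral {0..T} (\<lambda>s. ker N l t s i j * f s)) has_real_derivative
            integral {0..T} (\<lambda>s. dker l t s i j * f s)) (at t within {0..T}))"
    and bias_diff: "\<forall>l<nL N. \<forall>i<dims N (Suc l). \<forall>t\<in>{0..T}.
        ((\<lambda>t. bias N l t i) has_real_derivative db l t i) (at t within {0..T})"
begin

lemma vl_mask: "dims N l \<le> j \<Longrightarrow> vl N T U l t j = 0"
  by (cases l) (simp_all add: mask_def)

lemma pre_has_real_derivative:
  assumes l: "l < nL N" and i: "i < dims N (Suc l)" and t: "t \<in> {0..T}"
    and vl_diff: "\<And>t j. t \<in> {0..T} \<Longrightarrow>
        ((\<lambda>t. vl N T U l t j) has_real_derivative vl' t j) (at t within {0..T})"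
  shows "((\<lambda>\<tau>. pre N T U l \<tau> i) has_real_derivative
           mv (dims N l) (Wm N l) (vl' t) i + rterm N dker db T U l t i) (at t within {0..T})"
proof -
  have "((\<lambda>\<tau>. mv (dims N l) (Wm N l) (vl N T U l \<tau>) i) has_real_derivative
      mv (dims N l) (Wm N l) (vl' t) i) (at t within {0..T})"
    unfolding mv_def by (intro DERIV_sum DERIV_cmult vl_diff t)
  moreover have "((\<lambda>\<tau>. integral {0..T} (\<lambda>s. mv (dims N l) (ker N l \<tau> s) (vl N T U l s) i))
      has_real_derivative integral {0..T} (\<lambda>s. mv (dims N l) (dker l t s) (vl N T U l s) i))
      (at t within {0..T})"
    using T_pos t l i ker_cont ker_diff ker_leibniz
    by (intro has_real_derivative_integral_mv DERIV_continuous_on[OF vl_diff]) auto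
  ultimately show ?thesis
    unfolding pre_def rterm_def add.assoc
    by (intro DERIV_add) (use bias_diff l i t in auto)
qed

lemma vl_has_real_derivative:
  assumes "l \<le> nL N" and "t \<in> {0..T}"
  shows "((\<lambda>t. vl N T U l t j) has_real_derivative
           lamv N dsg DP T U l t j * U' t + nu N dsg dker db T U l t j) (at t within {0..T})"
  using assms
proof (induction l arbitrary: t j)
  case 0
  show ?case
  proof (cases "j < dims N 0")
    case True
    then have "((\<lambda>t. Pm N (U t) j) has_real_derivative DP (U t) j * U' t) (at t within {0..T})"
      using P_diff U_diff 0 by (intro DERIV_chain2[where f = "\<lambda>y. Pm N y j"]) auto
    with True show ?thesis by (simp add: mask_def)
  qed (simp add: mask_def)
next
  case (Suc l)
  show ?case
  proof (cases "j < dims N (Suc l)")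
    case True
    define vl' where "vl' t j = lamv N dsg DP T U l t j * U' t + nu N dsg dker db T U l t j" for t j
    have "((\<lambda>\<tau>. pre N T U l \<tau> j) has_real_derivative
        mv (dims N l) (Wm N l) (vl' t) j + rterm N dker db T U l t j) (at t within {0..T})"
      using Suc True unfolding vl'_def by (intro pre_has_real_derivative) auto
    moreover have "(sig N (Suc l) has_real_derivative dsg (Suc l) (pre N T U l t j)) (at (pre N T U l t j))"
      using sig_diff Suc.prems by simp
    ultimately have "((\<lambda>\<tau>. sig N (Suc l) (pre N T U l \<tau> j)) has_real_derivative
        dsg (Suc l) (pre N T U l t j) * (mv (dims N l) (Wm N l) (vl' t) j + rterm N dker db T U l t j))
        (at t within {0..T})"
      by (rule DERIV_chain2[rotated])
    moreover have "(\<lambda>\<tau>. vl N T U (Suc l) \<tau> j) = (\<lambda>\<tau>. sig N (Suc l) (pre N T U l \<tau> j))"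
      using True by (simp add: mask_def pre_def)
    ultimately show ?thesis
      using True by (simp add: vl'_def mv_def dg_def dsig_def mask_def sum.distrib
          sum_distrib_right sum_distrib_left algebra_simps)
  qed (simp add: mask_def dg_def dsig_def)
qed

lemma Gop_has_real_derivative:
  assumes t: "t \<in> {0..T}"
  shows "(Gop N T U has_real_derivative
           Lambda N dsg DP DQ T U t * U' t + Mu N dsg DQ dker db T U t) (at t within {0..T})"
proof -
  let ?L = "nL N" and ?v = "vl N T U (nL N)"
  have "((\<lambda>y. Qm N (?v y)) has_real_derivative
      (\<Sum>j<dims N ?L. DQ (?v t) j * (lamv N dsg DP T U ?L t j * U' t + nu N dsg dker db T U ?L t j)))
      (at t within {0..T})"
    using Q_diff vl_mask t by (intro has_grad_chain vl_has_real_derivative) auto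
  moreover have "(\<Sum>j<dims N ?L. DQ (?v t) j * (lamv N dsg DP T U ?L t j * U' t + nu N dsg dker db T U ?L t j))
      = Lambda N dsg DP DQ T U t * U' t + Mu N dsg DQ dker db T U t"
    unfolding Lambda_def Mu_def Let_def nu_output
    by (simp add: sum.distrib sum_distrib_left sum_distrib_right distrib_left algebra_simps)
  ultimately show ?thesis unfolding Gop_def[abs_def] by simp
qed

end

section \<open>The barrier function inequality\<close>

lemma has_real_derivative_along_graph:
  fixes G :: "real \<Rightarrow> real" and phi phit phiy :: "real \<Rightarrow> real \<Rightarrow> real"
  assumes G: "(G has_real_derivative G') (at t within S)"
    and phi: "((\<lambda>z. phi (fst z) (snd z)) has_derivative
        (\<lambda>h. phit t (G t) * fst h + phiy t (G t) * snd h)) (at (t, G t) within S \<times> UNIV)"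
  shows "((\<lambda>t. phi t (G t)) has_real_derivative phit t (G t) + phiy t (G t) * G') (at t within S)"
proof -
  have graph: "((\<lambda>t. (t, G t)) has_derivative (\<lambda>x. (x, G' * x))) (at t within S)"
    using G by (intro has_derivative_Pair has_derivative_ident) (simp add: has_field_derivative_def)
  have "((\<lambda>z. phi (fst z) (snd z)) has_derivative
      (\<lambda>h. phit t (G t) * fst h + phiy t (G t) * snd h)) (at (t, G t) within (\<lambda>t. (t, G t)) ` S)"
    by (rule has_derivative_subset[OF phi]) auto
  from diff_chain_within[OF graph this]
  have "((\<lambda>t. phi t (G t)) has_derivative
      (\<lambda>x. phit t (G t) * x + phiy t (G t) * (G' * x))) (at t within S)"
    by (simp add: o_def)
  then show ?thesis
    by (rule has_derivative_imp_has_field_derivative) (simp add: algebra_simps)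
qed

lemma integrating_factor_nonpos:
  fixes h h' :: "real \<Rightarrow> real" and T \<alpha> :: real
  assumes T: "T > 0" and \<alpha>: "\<alpha> \<noteq> 0"
    and h: "\<And>t. t \<in> {0..T} \<Longrightarrow> (h has_real_derivative h' t) (at t within {0..T})"
    and ineq: "\<And>t. t \<in> {0..T} \<Longrightarrow> h' t + \<alpha> * h t + \<alpha> / (exp (\<alpha> * T) - 1) * h 0 \<le> 0"
  shows "h T \<le> 0"
proof -
  define K where "K = h 0 / (exp (\<alpha> * T) - 1)"
  define w where "w t = exp (\<alpha> * t) * (h t + K)" for t
  define w' where "w' t = exp (\<alpha> * t) * (h' t + \<alpha> * h t + \<alpha> * K)" for t
  \<comment> \<open>\<open>w\<close> is non-increasing, and \<open>K\<close> is chosen so that \<open>w T - w 0 = exp (\<alpha> * T) * h T\<close>.\<close>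
  have "(w has_vector_derivative w' t) (at t within {0..T})" if "t \<in> {0..T}" for t
    unfolding w_def w'_def has_real_derivative_iff_has_vector_derivative[symmetric]
    by (auto intro!: derivative_eq_intros h[OF that] simp: algebra_simps)
  then have "(w' has_integral (w T - w 0)) {0..T}"
    using T by (intro fundamental_theorem_of_calculus) auto
  moreover have "w' t \<le> 0" if "t \<in> {0..T}" for t
    using ineq[OF that] by (simp add: w'_def K_def mult_nonneg_nonpos)
  ultimately have "w T \<le> w 0"
    using has_integral_le[of w' _ "{0..T}" "\<lambda>_. 0" 0] by force
  moreover have "w T - w 0 = exp (\<alpha> * T) * h T"
  proof -
    have "exp (\<alpha> * T) \<noteq> 1" using T \<alpha> by simp
    then have "K * (exp (\<alpha> * T) - 1) = h 0" by (simp add: K_def)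
    then show ?thesis by (simp add: w_def algebra_simps)
  qed
  ultimately have "exp (\<alpha> * T) * h T \<le> 0" by linarith
  then show ?thesis by (simp add: mult_le_0_iff)
qed

theorem theorem2:
  fixes N :: nop and T \<alpha> :: real and U U' Y :: "real \<Rightarrow> real"
    and u :: "real^'n \<Rightarrow> real \<Rightarrow> real"
    and DP :: "real \<Rightarrow> nat \<Rightarrow> real" and DQ :: "(nat \<Rightarrow> real) \<Rightarrow> nat \<Rightarrow> real"
    and dsg :: "nat \<Rightarrow> real \<Rightarrow> real"
    and dker :: "nat \<Rightarrow> real \<Rightarrow> real \<Rightarrow> nat \<Rightarrow> nat \<Rightarrow> real"
    and db :: "nat \<Rightarrow> real \<Rightarrow> nat \<Rightarrow> real"
    and phi phit phiy :: "real \<Rightarrow> real \<Rightarrow> real"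
  assumes T_pos: "T > 0" and alpha_pos: "\<alpha> > 0"
    and bc_input: "\<forall>t\<in>{0..T}. u (\<chi> i. 1) t = U t"
    and init: "\<forall>x. (\<forall>i. 0 \<le> x $ i \<and> x $ i \<le> 1) \<longrightarrow> u x 0 = U 0"
    and bc_output: "\<forall>t\<in>{0..T}. Y t = u 0 t"
    and exact: "\<forall>t\<in>{0..T}. Y t = Gop N T U t"
    and U_diff: "\<forall>t\<in>{0..T}. (U has_real_derivative U' t) (at t within {0..T})"
    and P_diff: "\<forall>y i. i < dims N 0 \<longrightarrow> ((\<lambda>y. Pm N y i) has_real_derivative DP y i) (at y)"
    and Q_diff: "\<forall>x. (\<forall>i\<ge>dims N (nL N). x i = 0) \<longrightarrow> has_grad (dims N (nL N)) (Qm N) x (DQ x)"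
    and sig_diff: "\<forall>l x. 1 \<le> l \<and> l \<le> nL N \<longrightarrow> (sig N l has_real_derivative dsg l x) (at x)"
    and ker_cont: "\<forall>l<nL N. \<forall>i<dims N (Suc l). \<forall>j<dims N l.
        continuous_on ({0..T} \<times> {0..T}) (\<lambda>z. ker N l (fst z) (snd z) i j)"
    and ker_diff: "\<forall>l<nL N. \<forall>i<dims N (Suc l). \<forall>j<dims N l. \<forall>t\<in>{0..T}. \<forall>s\<in>{0..T}.
        ((\<lambda>t. ker N l t s i j) has_real_derivative dker l t s i j) (at t within {0..T})"
    and ker_leibniz: "\<forall>l<nL N. \<forall>i<dims N (Suc l). \<forall>j<dims N l. \<forall>f. continuous_on {0..T} f \<longrightarrow>
        (\<forall>t\<in>{0..T}. ((\<lambda>t. integral {0..T} (\<lambda>s. ker N l t s i j * f s)) has_real_derivative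
            integral {0..T} (\<lambda>s. dker l t s i j * f s)) (at t within {0..T}))"
    and bias_diff: "\<forall>l<nL N. \<forall>i<dims N (Suc l). \<forall>t\<in>{0..T}.
        ((\<lambda>t. bias N l t i) has_real_derivative db l t i) (at t within {0..T})"
    and phi_diff: "\<forall>t\<in>{0..T}. \<forall>y. ((\<lambda>z. phi (fst z) (snd z)) has_derivative
        (\<lambda>h. phit t y * fst h + phiy t y * snd h)) (at (t, y) within {0..T} \<times> UNIV)"
    and phit_cont: "continuous_on ({0..T} \<times> UNIV) (\<lambda>z. phit (fst z) (snd z))"
    and phiy_cont: "continuous_on ({0..T} \<times> UNIV) (\<lambda>z. phiy (fst z) (snd z))"
  shows "(\<forall>t\<in>{0..T}. (Gop N T U has_real_derivative
            (Lambda N dsg DP DQ T U t * U' t + Mu N dsg DQ dker db T U t)) (at t within {0..T}))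
      \<and> ((\<forall>t\<in>{0..T}.
            phiy t (Gop N T U t) * vector_derivative (Gop N T U) (at t within {0..T})
            + phit t (Gop N T U t) + \<alpha> * phi t (Gop N T U t)
            + \<alpha> / (exp (\<alpha> * T) - 1) * phi 0 (U 0) \<le> 0)
         \<longrightarrow> (\<exists>t0\<in>{0..T}. \<forall>t\<in>{t0..T}. phi t (Y t) \<le> 0))"
proof -
  interpret differentiable_neural_operator N T U U' DP DQ dsg dker db
    by (rule differentiable_neural_operator.intro) fact+
  define G' where "G' t = Lambda N dsg DP DQ T U t * U' t + Mu N dsg DQ dker db T U t" for t
  have G_diff: "(Gop N T U has_real_derivative G' t) (at t within {0..T})" if "t \<in> {0..T}" for t
    unfolding G'_def using that by (rule Gop_has_real_derivative)
  have vector_derivative_G: "vector_derivative (Gop N T U) (at t within {0..T}) = G' t" if "t \<in> {0..T}" for t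
    using G_diff[OF that] vector_derivative_within_cbox[OF T_pos, of t] that
    by (simp add: has_real_derivative_iff_has_vector_derivative cbox_interval)
  \<comment> \<open>The PDE enters only through \<open>Y(0) = U(0)\<close>.\<close>
  have U0: "U 0 = Gop N T U 0"
  proof -
    have "u 0 0 = U 0" using init by simp
    then show ?thesis using bc_output exact T_pos by force
  qed
  have phi_T: "phi T (Gop N T U T) \<le> 0"
    if H: "\<forall>t\<in>{0..T}. phiy t (Gop N T U t) * vector_derivative (Gop N T U) (at t within {0..T})
          + phit t (Gop N T U t) + \<alpha> * phi t (Gop N T U t)
          + \<alpha> / (exp (\<alpha> * T) - 1) * phi 0 (U 0) \<le> 0"
  proof (rule integrating_factor_nonpos[OF T_pos, where \<alpha> = \<alpha> and h = "\<lambda>t. phi t (Gop N T U t)"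
        and h' = "\<lambda>t. phit t (Gop N T U t) + phiy t (Gop N T U t) * G' t"])
    show "((\<lambda>t. phi t (Gop N T U t)) has_real_derivative
        phit t (Gop N T U t) + phiy t (Gop N T U t) * G' t) (at t within {0..T})" if "t \<in> {0..T}" for t
      using that phi_diff by (intro has_real_derivative_along_graph G_diff) auto
  qed (use H alpha_pos vector_derivative_G U0 in \<open>auto simp: algebra_simps\<close>)
  show ?thesis
    using G_diff phi_T exact T_pos unfolding G'_def
    by (intro conjI impI ballI bexI[of _ T]) auto
qed

end
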